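(* Let $a,b\ge 0$ and $c>0$, and let $q:\mathbb R^M\to\mathbb R_+$ be a positive semidefinite quadratic form. Then the function $x\mapsto\left(a-b\,e^{-b\,q(x)}\right)e^{-c\,q(x)}$ is log-concave on $\mathbb R^M$ whenever $a\ge\frac{b^2+2bc}{c}$.
   Context: A function $f:\mathbb R^M\to\mathbb R_{\ge 0}$ is log-concave if $\log f$ is concave. *)

theory Defs
  imports "HOL-Analysis.Analysis"
begin

definition ln_ext :: "real \<Rightarrow> ereal" where
  "ln_ext x = (if x > 0 then ereal (ln x) else -\<infinity>)"

definition log_concave :: "('a::real_vector \<Rightarrow> real) \<Rightarrow> bool" where
  "log_concave f \<longleftrightarrow> (\<forall>x. f x \<ge> 0) \<and>
     (\<forall>x y t. 0 \<le> t \<and> t \<le> 1 \<longrightarrow>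
        ereal (1 - t) * ln_ext (f x) + ereal t * ln_ext (f y)
          \<le> ln_ext (f ((1 - t) *\<^sub>R x + t *\<^sub>R y)))"

definition quadratic_form :: "(real ^ 'M \<Rightarrow> real) \<Rightarrow> bool" where
  "quadratic_form q \<longleftrightarrow> (\<exists>A :: real ^ 'M ^ 'M. \<forall>x. q x = x \<bullet> (A *v x))"

definition psd_quadratic_form :: "(real ^ 'M \<Rightarrow> real) \<Rightarrow> bool" where
  "psd_quadratic_form q \<longleftrightarrow> quadratic_form q \<and> (\<forall>x. q x \<ge> 0)"

end

theory Submission
  imports Defs
begin

text \<open>Write the function as \<open>F \<circ> q\<close> with the profile \<open>F s = (a - b exp (-b s)) exp (-c s)\<close>.
On \<open>s \<ge> 0\<close>, \<open>ln F s = ln (a - b exp (-b s)) - c s\<close> is concave, since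
\<open>a - b exp (-b s)\<close> is concave and positive and \<open>ln\<close> is concave and increasing.
The bound on \<open>a\<close> gives \<open>b (b + c) exp (-b s) \<le> a c\<close>, which is \<open>F' \<le> 0\<close>,
so \<open>ln F\<close> is also nonincreasing. A concave nonincreasing function of the convex
nonnegative function \<open>q\<close> is concave.\<close>

lemma psd_quadratic_form_convex:
  fixes q :: "real ^ 'M \<Rightarrow> real"
  assumes "psd_quadratic_form q"
  shows "convex_on UNIV q"
proof (rule convex_onI)
  fix t :: real and x y :: "real ^ 'M"
  obtain A :: "real ^ 'M ^ 'M" where A: "\<And>x. q x = x \<bullet> (A *v x)"
    using assms unfolding psd_quadratic_form_def quadratic_form_def by blast
  have gap: "(1 - t) * q x + t * q y - q ((1 - t) *\<^sub>R x + t *\<^sub>R y) = t * (1 - t) * q (x - y)"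
    unfolding A
    by (simp add: matrix_vector_mult_diff_distrib matrix_vector_right_distrib
        matrix_vector_mult_scaleR inner_diff_left inner_diff_right inner_add_left
        inner_add_right algebra_simps)
  assume "0 < t" "t < 1"
  moreover have "q (x - y) \<ge> 0"
    using assms unfolding psd_quadratic_form_def by blast
  ultimately have "t * (1 - t) * q (x - y) \<ge> 0"
    by simp
  with gap show "q ((1 - t) *\<^sub>R x + t *\<^sub>R y) \<le> (1 - t) * q x + t * q y"
    by linarith
qed simp

lemma concave_on_compose_mono:
  fixes g :: "real \<Rightarrow> real"
  assumes g: "concave_on T g" "mono_on T g"
    and f: "concave_on S f" "f ` S \<subseteq> T"
  shows "concave_on S (\<lambda>x. g (f x))"
proof -
  have "convex T" "convex S"
    using g f by (simp_all add: concave_on_imp_convex)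
  show ?thesis
  proof (rule concave_on_iff[THEN iffD2], intro conjI ballI allI impI)
    fix x y and u v :: real
    assume xy: "x \<in> S" "y \<in> S" and uv: "0 \<le> u" "0 \<le> v" "u + v = 1"
    have fxy: "f x \<in> T" "f y \<in> T"
      using f(2) xy by auto
    have "u * g (f x) + v * g (f y) \<le> g (u * f x + v * f y)"
      using concave_on_iff[THEN iffD1, OF g(1)] fxy uv by simp
    also have "\<dots> \<le> g (f (u *\<^sub>R x + v *\<^sub>R y))"
    proof (rule mono_onD[OF g(2)])
      show "u * f x + v * f y \<in> T"
        using \<open>convex T\<close> fxy uv by (simp add: convex_def)
      show "f (u *\<^sub>R x + v *\<^sub>R y) \<in> T"
        using \<open>convex S\<close> f(2) xy uv by (auto simp: convex_def)
      show "u * f x + v * f y \<le> f (u *\<^sub>R x + v *\<^sub>R y)"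
        using concave_on_iff[THEN iffD1, OF f(1)] xy uv by simp
    qed
    finally show "u * g (f x) + v * g (f y) \<le> g (f (u *\<^sub>R x + v *\<^sub>R y))" .
  qed fact
qed

lemma concave_on_compose_antimono:
  fixes g :: "real \<Rightarrow> real"
  assumes g: "concave_on T g" "antimono_on T g"
    and f: "convex_on S f" "f ` S \<subseteq> T"
  shows "concave_on S (\<lambda>x. g (f x))"
proof -
  have "convex T" "convex S"
    using g f by (simp_all add: concave_on_imp_convex convex_on_imp_convex)
  show ?thesis
  proof (rule concave_on_iff[THEN iffD2], intro conjI ballI allI impI)
    fix x y and u v :: real
    assume xy: "x \<in> S" "y \<in> S" and uv: "0 \<le> u" "0 \<le> v" "u + v = 1"
    have fxy: "f x \<in> T" "f y \<in> T"
      using f(2) xy by auto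
    have "u * g (f x) + v * g (f y) \<le> g (u * f x + v * f y)"
      using concave_on_iff[THEN iffD1, OF g(1)] fxy uv by simp
    also have "\<dots> \<le> g (f (u *\<^sub>R x + v *\<^sub>R y))"
    proof (rule monotone_onD[OF g(2)])
      show "f (u *\<^sub>R x + v *\<^sub>R y) \<in> T"
        using \<open>convex S\<close> f(2) xy uv by (auto simp: convex_def)
      show "u * f x + v * f y \<in> T"
        using \<open>convex T\<close> fxy uv by (simp add: convex_def)
      show "f (u *\<^sub>R x + v *\<^sub>R y) \<le> u * f x + v * f y"
        using f(1) xy uv by (simp add: convex_on_def)
    qed
    finally show "u * g (f x) + v * g (f y) \<le> g (f (u *\<^sub>R x + v *\<^sub>R y))" .
  qed fact
qed

lemma log_concave_zero: "log_concave (\<lambda>x. 0)"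
  unfolding log_concave_def ln_ext_def by (auto simp: le_less)

lemma pos_ln_concave_imp_log_concave:
  assumes "\<And>x. f x > 0" "concave_on UNIV (\<lambda>x. ln (f x))"
  shows "log_concave f"
  unfolding log_concave_def ln_ext_def
  using assms concave_onD[OF assms(2)] by (auto simp: less_imp_le)

lemma convex_on_exp_scaled: "convex_on UNIV (\<lambda>s. exp (l * s))"
  by (intro f''_ge0_imp_convex derivative_eq_intros | simp add: mult.assoc)+

lemma const_minus_exp_pos:
  fixes a b k s :: real
  assumes "0 \<le> b" "0 \<le> k" "b < a" "0 \<le> s"
  shows "0 < a - b * exp (- k * s)"
proof -
  have "b * exp (- k * s) \<le> b"
    using assms by (simp add: mult_left_le)
  with assms(3) show ?thesis
    by linarith
qed

lemma concave_on_ln_const_minus_exp: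
  fixes a b k :: real
  assumes "0 \<le> b" "0 \<le> k" "b < a"
  shows "concave_on {0..} (\<lambda>s. ln (a - b * exp (- k * s)))"
proof (rule concave_on_compose_mono[OF ln_concave])
  show "mono_on {0::real<..} ln"
    by (auto intro!: mono_onI)
  show "concave_on {0..} (\<lambda>s. a - b * exp (- k * s))"
    using assms(1) convex_on_subset[OF convex_on_exp_scaled[of "- k"]]
    by (intro concave_on_diff convex_on_cmul) (auto simp: concave_on_const)
  show "(\<lambda>s. a - b * exp (- k * s)) ` {0..} \<subseteq> {0<..}"
    using const_minus_exp_pos[OF assms] by auto
qed

lemma antimono_on_profile:
  fixes a b c :: real
  assumes "0 \<le> b" "0 \<le> c" "b * (b + c) \<le> a * c"
  shows "antimono_on {0..} (\<lambda>s. (a - b * exp (- b * s)) * exp (- c * s))"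
proof (rule monotone_onI)
  fix s s' :: real
  assume s: "s \<in> {0..}" "s' \<in> {0..}" "s \<le> s'"
  show "(a - b * exp (- b * s')) * exp (- c * s') \<le> (a - b * exp (- b * s)) * exp (- c * s)"
  proof (rule deriv_nonpos_imp_antimono[where g = "\<lambda>s. (a - b * exp (- b * s)) * exp (- c * s)"
        and g' = "\<lambda>x. exp (- c * x) * (b * (b + c) * exp (- b * x) - a * c)"])
    show "((\<lambda>s. (a - b * exp (- b * s)) * exp (- c * s)) has_real_derivative
        exp (- c * x) * (b * (b + c) * exp (- b * x) - a * c)) (at x)" for x
      by (rule derivative_eq_intros refl | simp add: algebra_simps power2_eq_square)+
    show "exp (- c * x) * (b * (b + c) * exp (- b * x) - a * c) \<le> 0" if "x \<in> {s..s'}" for x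
    proof -
      have "b * (b + c) * exp (- b * x) \<le> b * (b + c)"
        using assms(1,2) s that by (simp add: mult_left_le)
      with assms(3) show ?thesis
        by (simp add: mult_nonneg_nonpos)
    qed
  qed (use s in simp)
qed

lemma antimono_on_ln_profile:
  fixes a b c :: real
  assumes "0 \<le> b" "0 \<le> c" "b < a" "b * (b + c) \<le> a * c"
  shows "antimono_on {0..} (\<lambda>s. ln (a - b * exp (- b * s)) - c * s)"
proof (rule monotone_onI)
  fix s s' :: real
  assume s: "s \<in> {0..}" "s' \<in> {0..}" "s \<le> s'"
  have profile_pos: "0 < (a - b * exp (- b * x)) * exp (- c * x)" if "0 \<le> x" for x
    using const_minus_exp_pos[OF assms(1,1,3) that] by simp
  have ln_profile: "ln ((a - b * exp (- b * x)) * exp (- c * x)) = ln (a - b * exp (- b * x)) - c * x"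
    if "0 \<le> x" for x
    using const_minus_exp_pos[OF assms(1,1,3) that] by (simp add: ln_mult_pos)
  have "(a - b * exp (- b * s')) * exp (- c * s') \<le> (a - b * exp (- b * s)) * exp (- c * s)"
    using monotone_onD[OF antimono_on_profile[OF assms(1,2,4)] s] by simp
  then have "ln ((a - b * exp (- b * s')) * exp (- c * s')) \<le> ln ((a - b * exp (- b * s)) * exp (- c * s))"
    using profile_pos s by (simp add: ln_le_cancel_iff)
  then show "ln (a - b * exp (- b * s')) - c * s' \<le> ln (a - b * exp (- b * s)) - c * s"
    using s by (simp only: ln_profile atLeast_iff)
qed

lemma log_concave_profile_compose_convex:
  fixes q :: "'a::real_vector \<Rightarrow> real" and a b c :: real
  assumes "0 \<le> b" "0 \<le> c" "b < a" "b * (b + c) \<le> a * c"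
    and "convex_on UNIV q" "\<And>x. 0 \<le> q x"
  shows "log_concave (\<lambda>x. (a - b * exp (- b * q x)) * exp (- c * q x))"
proof -
  define g where "g s = ln (a - b * exp (- b * s)) - c * s" for s
  have "concave_on UNIV (\<lambda>x. g (q x))"
  proof (rule concave_on_compose_antimono[where g = g and f = q and T = "{0..}"])
    show "concave_on {0..} g"
      unfolding g_def using assms(1-3)
      by (intro concave_on_diff concave_on_ln_const_minus_exp convex_on_cmul)
        (auto simp: convex_on_ident)
    show "antimono_on {0..} g"
      unfolding g_def using assms(1-4) by (rule antimono_on_ln_profile)
  qed (use assms(5,6) in auto)
  moreover have pos: "0 < a - b * exp (- b * q x)" for x
    using const_minus_exp_pos[OF assms(1,1,3,6)] .
  moreover have "(\<lambda>x. ln ((a - b * exp (- b * q x)) * exp (- c * q x))) = (\<lambda>x. g (q x))"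
    using pos by (simp add: g_def ln_mult_pos)
  ultimately show ?thesis
    by (intro pos_ln_concave_imp_log_concave) simp_all
qed

theorem lemma2:
  fixes q :: "real ^ 'M \<Rightarrow> real" and a b c :: real
  assumes "a \<ge> 0" and "b \<ge> 0" and "c > 0"
    and "psd_quadratic_form q"
    and "a \<ge> (b\<^sup>2 + 2 * b * c) / c"
  shows "log_concave (\<lambda>x. (a - b * exp (- b * q x)) * exp (- c * q x))"
proof -
  have ac: "b\<^sup>2 + 2 * b * c \<le> a * c"
    using assms(3,5) by (simp add: field_simps)
  then have "2 * b * c \<le> a * c"
    using zero_le_power2[of b] by linarith
  then have "2 * b \<le> a"
    using assms(3) by simp
  show ?thesis
  proof (cases "a = 0")
    case True
    with \<open>2 * b \<le> a\<close> assms(2) show ?thesis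
      using log_concave_zero by simp
  next
    case False
    with assms(1,2) \<open>2 * b \<le> a\<close> have "b < a"
      by linarith
    moreover have "b * (b + c) \<le> a * c"
      using ac mult_nonneg_nonneg[of b c] assms(2,3)
      unfolding power2_eq_square distrib_left by linarith
    moreover have "\<And>x. 0 \<le> q x"
      using assms(4) unfolding psd_quadratic_form_def by blast
    ultimately show ?thesis
      using assms(2,3,4) psd_quadratic_form_convex
      by (intro log_concave_profile_compose_convex) auto
  qed
qed

end
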